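(* Let $d>2$, let $\alpha,\lambda\in\overline{\mathbb Q}$, and let $|\cdot|_v$ be an absolute value on $\overline{\mathbb Q}$. If $|\alpha|_v\ge2$ and $|\lambda|_v\le\frac12$, then for each $n_0\ge0$, $$\left|\lim_{n\to\infty}\frac{\log M_{n,v}}{d^n}-\frac{\log M_{n_0,v}}{d^{n_0}}\right|\le\frac{\log 2}{d^{n_0}(d-1)}.$$
   Context: Define $A_0=\alpha$, $B_0=1$, and for $n\ge0$, $A_{n+1}=A_n^d+\lambda B_n^d$, $B_{n+1}=A_nB_n^{d-1}$ (so $[A_n:B_n]$ is the $n$-th iterate of $\alpha$ under $z\mapsto(z^d+\lambda)/z$). Set $M_{n,v}=\max\{|A_n|_v,|B_n|_v\}$. *)

theory Defs
  imports "HOL-Computational_Algebra.Computational_Algebra"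
begin

definition Qbar :: "complex set" where
  "Qbar = {z. algebraic z}"

definition is_abs_value_Qbar :: "(complex \<Rightarrow> real) \<Rightarrow> bool" where
  "is_abs_value_Qbar v \<longleftrightarrow>
     (\<forall>x\<in>Qbar. v x \<ge> 0) \<and>
     (\<forall>x\<in>Qbar. v x = 0 \<longleftrightarrow> x = 0) \<and>
     (\<forall>x\<in>Qbar. \<forall>y\<in>Qbar. v (x * y) = v x * v y) \<and>
     (\<forall>x\<in>Qbar. \<forall>y\<in>Qbar. v (x + y) \<le> v x + v y)"

text \<open>Homogeneous iteration of z \<mapsto> (z^d + \<lambda>)/z: the pair (A_n, B_n).\<close>
fun AB :: "nat \<Rightarrow> complex \<Rightarrow> complex \<Rightarrow> nat \<Rightarrow> complex \<times> complex" where
  "AB d alpha lam 0 = (alpha, 1)"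
| "AB d alpha lam (Suc n) =
     (let (a, b) = AB d alpha lam n in (a ^ d + lam * b ^ d, a * b ^ (d - 1)))"

definition A_seq :: "nat \<Rightarrow> complex \<Rightarrow> complex \<Rightarrow> nat \<Rightarrow> complex" where
  "A_seq d alpha lam n = fst (AB d alpha lam n)"

definition B_seq :: "nat \<Rightarrow> complex \<Rightarrow> complex \<Rightarrow> nat \<Rightarrow> complex" where
  "B_seq d alpha lam n = snd (AB d alpha lam n)"

definition M_seq :: "(complex \<Rightarrow> real) \<Rightarrow> nat \<Rightarrow> complex \<Rightarrow> complex \<Rightarrow> nat \<Rightarrow> real" where
  "M_seq v d alpha lam n = max (v (A_seq d alpha lam n)) (v (B_seq d alpha lam n))"

end

theory Submission imports Defs begin

text \<open>Because \<open>|\<lambda>|\<^sub>v \<le> 1/2\<close> and \<open>|\<alpha>|\<^sub>v \<ge> 2\<close>, the first coordinate dominates along the whole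
  orbit: inductively \<open>2|B\<^sub>n|\<^sub>v \<le> |A\<^sub>n|\<^sub>v\<close>, hence \<open>|\<lambda>B\<^sub>n\<^sup>d|\<^sub>v \<le> |A\<^sub>n|\<^sub>v\<^sup>d/16\<close> and \<open>|A\<^sub>n\<^sub>+\<^sub>1|\<^sub>v\<close> lies
  within a factor 2 of \<open>|A\<^sub>n|\<^sub>v\<^sup>d\<close>. So \<open>M\<^sub>n\<^sub>,\<^sub>v = |A\<^sub>n|\<^sub>v\<close> and \<open>log M\<^sub>n\<^sub>,\<^sub>v / d\<^sup>n\<close> changes by at most
  \<open>log 2 / d\<^sup>n\<^sup>+\<^sup>1\<close> per step; summing the geometric tail gives the bound.\<close>

text \<open>The absolute value is only given on algebraic numbers, so we need their closure under
  sums and products: \<open>z\<close> is algebraic iff its powers span a finite-dimensional \<open>\<rat>\<close>-subspace.\<close>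

interpretation Q: vector_space "\<lambda>(r::rat) (z::complex). of_rat r * z"
  by unfold_locales (auto simp: algebra_simps of_rat_add of_rat_mult)

lemma Q_span_mult:
  assumes "a \<in> Q.span S" "b \<in> Q.span T"
  shows "a * b \<in> Q.span {s * t | s t. s \<in> S \<and> t \<in> T}"
proof -
  from assms(1) obtain t1 r where t1: "finite t1" "t1 \<subseteq> S" "a = (\<Sum>x\<in>t1. of_rat (r x) * x)"
    unfolding Q.span_explicit by blast
  from assms(2) obtain t2 q where t2: "finite t2" "t2 \<subseteq> T" "b = (\<Sum>x\<in>t2. of_rat (q x) * x)"
    unfolding Q.span_explicit by blast
  have "a * b = (\<Sum>x\<in>t1. \<Sum>y\<in>t2. of_rat (r x * q y) * (x * y))"
    by (simp add: t1(3) t2(3) sum_distrib_left sum_distrib_right of_rat_mult algebra_simps)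
  also have "\<dots> \<in> Q.span {s * t | s t. s \<in> S \<and> t \<in> T}"
    using t1(2) t2(2) by (intro Q.span_sum Q.span_scale Q.span_base) blast
  finally show ?thesis .
qed

lemma algebraic_if_powers_in_finite_span:
  assumes T: "finite T" and sp: "\<And>n. z ^ n \<in> Q.span T"
  shows "algebraic z"
proof (cases "inj_on (\<lambda>k. z ^ k) {..card T}")
  case False
  then obtain i j where ij: "i < j" "z ^ i = z ^ j"
    unfolding inj_on_def by (metis linorder_neqE_nat)
  define p :: "complex poly" where "p = monom 1 j - monom 1 i"
  show ?thesis
  proof (rule algebraicI[of p])
    show "coeff p k \<in> \<int>" for k by (auto simp: p_def coeff_monom)
    have "coeff p j = 1" using ij by (simp add: p_def coeff_monom)
    thus "p \<noteq> 0" by auto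
    show "poly p z = 0" using ij by (simp add: p_def poly_monom)
  qed
next
  case True
  define S where "S = (\<lambda>k. z ^ k) ` {..card T}"
  have "card S = card T + 1" using True by (simp add: S_def card_image)
  moreover have "S \<subseteq> Q.span T" using sp by (auto simp: S_def)
  ultimately have "Q.dependent S"
    using Q.independent_span_bound[OF T, of S] by auto
  then obtain u where u: "\<exists>v\<in>S. u v \<noteq> 0" "(\<Sum>v\<in>S. of_rat (u v) * v) = 0"
    using Q.dependent_finite by (auto simp: S_def)
  define p :: "complex poly" where
    "p = (\<Sum>k\<le>card T. monom (of_rat (u (z ^ k))) k)"
  have cp: "coeff p k = (if k \<le> card T then of_rat (u (z ^ k)) else 0)" for k
    by (simp add: p_def coeff_sum coeff_monom)
  show ?thesis
  proof (rule algebraicI'[of p])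
    show "coeff p k \<in> \<rat>" for k by (simp add: cp)
    from u(1) obtain k where "k \<le> card T" "u (z ^ k) \<noteq> 0" by (auto simp: S_def)
    hence "coeff p k \<noteq> 0" by (simp add: cp)
    thus "p \<noteq> 0" by auto
    have "poly p z = (\<Sum>k\<le>card T. of_rat (u (z ^ k)) * z ^ k)"
      by (simp add: p_def poly_sum poly_monom)
    also have "\<dots> = (\<Sum>v\<in>S. of_rat (u v) * v)"
      unfolding S_def by (subst sum.reindex[OF True]) simp
    finally show "poly p z = 0" using u(2) by simp
  qed
qed

lemma powers_in_finite_span_if_algebraic:
  assumes "algebraic z"
  obtains T where "finite T" "\<And>n. z ^ n \<in> Q.span T"
proof -
  from assms obtain p where p: "\<And>i. coeff p i \<in> \<int>" "p \<noteq> 0" "poly p z = 0"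
    by (erule algebraicE)
  define d where "d = degree p"
  define c where "c = lead_coeff p"
  have c0: "c \<noteq> 0" using p(2) by (simp add: c_def)
  have "0 = (\<Sum>i<d. coeff p i * z ^ i) + c * z ^ d"
    using p(3) by (simp add: poly_altdef d_def c_def lessThan_Suc_atMost[symmetric])
  hence "z ^ d = - (\<Sum>i<d. coeff p i * z ^ i) / c"
    using c0 by (simp add: field_simps eq_neg_iff_add_eq_0 add.commute)
  hence zd: "z ^ d = - (\<Sum>i<d. (coeff p i / c) * z ^ i)"
    by (simp add: sum_divide_distrib)
  have rat: "coeff p i / c \<in> \<rat>" for i
    using p(1) unfolding c_def by (intro Rats_divide) (auto intro: subsetD[OF Ints_subset_Rats])
  define T where "T = (\<lambda>i. z ^ i) ` {..<d}"
  have "z ^ n \<in> Q.span T" for n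
  proof (induction n rule: less_induct)
    case (less n)
    show ?case
    proof (cases "n < d")
      case True thus ?thesis by (intro Q.span_base) (auto simp: T_def)
    next
      case False
      have "z ^ n = z ^ (n - d) * z ^ d" using False by (simp add: power_add[symmetric])
      also have "\<dots> = - (\<Sum>i<d. (coeff p i / c) * z ^ (n - d + i))"
        by (simp add: zd sum_distrib_left power_add algebra_simps)
      also have "\<dots> \<in> Q.span T"
      proof (intro Q.span_neg Q.span_sum)
        fix i assume i: "i \<in> {..<d}"
        obtain r where r: "coeff p i / c = of_rat r" using rat[of i] by (auto elim: Rats_cases)
        have "z ^ (n - d + i) \<in> Q.span T" using i False by (intro less) auto
        thus "coeff p i / c * z ^ (n - d + i) \<in> Q.span T" unfolding r by (rule Q.span_scale)
      qed
      finally show ?thesis .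
    qed
  qed
  thus ?thesis using that by (auto simp: T_def)
qed

lemma algebraic_plus_times:
  fixes x y :: complex
  assumes "algebraic x" "algebraic y"
  shows "algebraic (x + y)" and "algebraic (x * y)"
proof -
  obtain X where X: "finite X" "\<And>n. x ^ n \<in> Q.span X"
    using powers_in_finite_span_if_algebraic[OF assms(1)] by blast
  obtain Y where Y: "finite Y" "\<And>n. y ^ n \<in> Q.span Y"
    using powers_in_finite_span_if_algebraic[OF assms(2)] by blast
  define P where "P = {s * t | s t. s \<in> X \<and> t \<in> Y}"
  have "P = (\<lambda>(s,t). s * t) ` (X \<times> Y)" by (auto simp: P_def)
  hence fP: "finite P" using X(1) Y(1) by simp
  have xy: "x ^ i * y ^ j \<in> Q.span P" for i j
    unfolding P_def by (rule Q_span_mult[OF X(2) Y(2)])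
  have "(x + y) ^ n \<in> Q.span P" for n
  proof -
    have "(x + y) ^ n = (\<Sum>k\<le>n. of_rat (of_nat (n choose k)) * (x ^ k * y ^ (n - k)))"
      by (simp add: binomial_ring mult.assoc)
    also have "\<dots> \<in> Q.span P" by (intro Q.span_sum Q.span_scale xy)
    finally show ?thesis .
  qed
  thus "algebraic (x + y)" by (rule algebraic_if_powers_in_finite_span[OF fP])
  have "(x * y) ^ n \<in> Q.span P" for n
    using xy[of n n] by (simp add: power_mult_distrib)
  thus "algebraic (x * y)" by (rule algebraic_if_powers_in_finite_span[OF fP])
qed

lemma algebraic_power: "algebraic (x::complex) \<Longrightarrow> algebraic (x ^ n)"
  by (induction n) (auto intro: algebraic_plus_times)

context
  fixes v :: "complex \<Rightarrow> real"
  assumes v: "is_abs_value_Qbar v"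
begin

lemma abs_value_nonneg: "algebraic x \<Longrightarrow> v x \<ge> 0"
  and abs_value_eq_0_iff: "algebraic x \<Longrightarrow> v x = 0 \<longleftrightarrow> x = 0"
  and abs_value_mult: "algebraic x \<Longrightarrow> algebraic y \<Longrightarrow> v (x * y) = v x * v y"
  and abs_value_triangle: "algebraic x \<Longrightarrow> algebraic y \<Longrightarrow> v (x + y) \<le> v x + v y"
  using v by (auto simp: is_abs_value_Qbar_def Qbar_def)

lemma abs_value_one: "v 1 = 1"
  using abs_value_mult[of 1 1] abs_value_eq_0_iff[of 1] by simp

lemma abs_value_minus: "algebraic x \<Longrightarrow> v (- x) = v x"
proof -
  assume x: "algebraic x"
  have m1: "algebraic (-1 :: complex)" by (rule algebraic_minus) simp
  have "(v (-1) - 1) * (v (-1) + 1) = 0"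
    using abs_value_mult[OF m1 m1] abs_value_one by (simp add: algebra_simps)
  moreover have "v (-1) + 1 > 0" using abs_value_nonneg[OF m1] by simp
  ultimately have "v (-1) = 1" by simp
  thus ?thesis using abs_value_mult[OF m1 x] by simp
qed

lemma abs_value_power: "algebraic x \<Longrightarrow> v (x ^ n) = v x ^ n"
  by (induction n) (auto simp: abs_value_one abs_value_mult algebraic_power)

lemma abs_value_triangle_rev:
  assumes x: "algebraic x" and y: "algebraic y"
  shows "v x - v y \<le> v (x + y)"
proof -
  have "v ((x + y) + - y) \<le> v (x + y) + v (- y)"
    using abs_value_triangle[OF algebraic_plus_times(1)[OF x y] algebraic_minus[OF y]] .
  thus ?thesis using abs_value_minus[OF y] by simp
qed

end

lemma convergent_and_tail_bound_if_geometric_increments: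
  fixes L :: "nat \<Rightarrow> real" and c r :: real
  assumes r: "r > 1"
    and step: "\<And>n. \<bar>L (Suc n) - L n\<bar> \<le> c / r ^ Suc n"
  shows "convergent L \<and> \<bar>lim L - L n0\<bar> \<le> c / (r ^ n0 * (r - 1))"
proof -
  define D where "D k = L (Suc k) - L k" for k
  define g where "g k = (c / r) * (1 / r) ^ k" for k
  have gk: "g k = c / r ^ Suc k" for k by (simp add: g_def power_one_over)
  have sg: "summable g" unfolding g_def using r by (intro summable_mult summable_geometric) auto
  have nD: "norm (D k) \<le> g k" for k using step[of k] by (simp add: D_def gk)
  have sD: "summable D" by (rule summable_comparison_test'[OF sg]) (use nD in auto)
  have Ln: "L = (\<lambda>n. L 0 + (\<Sum>k<n. D k))"
    by (simp add: D_def sum_lessThan_telescope)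
  have "L \<longlonglongrightarrow> L 0 + suminf D"
    by (subst Ln) (intro tendsto_add tendsto_const summable_LIMSEQ sD)
  hence conv: "convergent L" and lim: "lim L = L 0 + suminf D"
    by (auto simp: convergent_def limI)
  have "lim L - L n0 = (\<Sum>k. D (k + n0))"
    using suminf_split_initial_segment[OF sD, of n0] lim fun_cong[OF Ln, of n0] by simp
  also have "\<bar>\<dots>\<bar> \<le> (\<Sum>k. g (k + n0))"
    using norm_suminf_le[of "\<lambda>k. D (k + n0)" "\<lambda>k. g (k + n0)"] nD sg
    by (simp add: summable_iff_shift)
  also have "(\<lambda>k. g (k + n0)) = (\<lambda>k. (c / r ^ Suc n0) * (1 / r) ^ k)"
    using r by (auto simp: g_def power_add field_simps)
  also have "(\<Sum>k. (c / r ^ Suc n0) * (1 / r) ^ k) = c / (r ^ n0 * (r - 1))"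
    using r by (subst suminf_mult[OF summable_geometric]) (auto simp: suminf_geometric field_simps)
  finally show ?thesis using conv by simp
qed

lemma A_seq_0: "A_seq d a l 0 = a"
  and B_seq_0: "B_seq d a l 0 = 1"
  by (simp_all add: A_seq_def B_seq_def)

lemma A_seq_Suc: "A_seq d a l (Suc n) = A_seq d a l n ^ d + l * B_seq d a l n ^ d"
  and B_seq_Suc: "B_seq d a l (Suc n) = A_seq d a l n * B_seq d a l n ^ (d - 1)"
  by (simp_all add: A_seq_def B_seq_def split: prod.split)

lemma algebraic_A_B_seq:
  assumes "algebraic a" "algebraic l"
  shows "algebraic (A_seq d a l n) \<and> algebraic (B_seq d a l n)"
  by (induction n) (use assms in \<open>auto simp: A_seq_0 B_seq_0 A_seq_Suc B_seq_Suc
        intro!: algebraic_plus_times algebraic_power\<close>)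

lemma dominant_term_step:
  fixes a b l x :: real and d :: nat
  assumes d: "d > 2" and a: "a > 0" and b: "0 \<le> b" "2 * b \<le> a" and l: "0 \<le> l" "l \<le> 1/2"
    and x: "\<bar>x - a ^ d\<bar> \<le> l * b ^ d"
  shows "a ^ d / 2 \<le> x" "x \<le> 2 * a ^ d" "2 * (a * b ^ (d - 1)) \<le> x"
proof -
  have "(2::real) ^ 3 \<le> 2 ^ d" "(2::real) ^ 2 \<le> 2 ^ (d - 1)"
    using d by (intro power_increasing; simp)+
  hence "b ^ d * 8 \<le> b ^ d * 2 ^ d" "b ^ (d - 1) * 4 \<le> b ^ (d - 1) * 2 ^ (d - 1)"
    using b by (simp_all add: mult_left_mono)
  moreover have "b ^ d * 2 ^ d \<le> a ^ d" "b ^ (d - 1) * 2 ^ (d - 1) \<le> a ^ (d - 1)"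
    using b by (simp_all only: power_mult_distrib[symmetric] mult.commute[of b] power_mono)
  ultimately have "b ^ d * 8 \<le> a ^ d" "a * (b ^ (d - 1) * 4) \<le> a * a ^ (d - 1)"
    using a by (auto intro: mult_left_mono)
  moreover have "a * a ^ (d - 1) = a ^ d" using d by (simp add: power_Suc[symmetric])
  moreover have "l * b ^ d \<le> (1/2) * b ^ d" using l b by (intro mult_right_mono) auto
  moreover have "0 \<le> l * b ^ d" using l b by simp
  ultimately show "a ^ d / 2 \<le> x" "x \<le> 2 * a ^ d" "2 * (a * b ^ (d - 1)) \<le> x"
    using x unfolding abs_le_iff by argo+
qed

context
  fixes v :: "complex \<Rightarrow> real" and d :: nat and alpha lam :: complex
  assumes v: "is_abs_value_Qbar v" and d: "d > 2"
    and alpha: "algebraic alpha" and lam: "algebraic lam"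
    and alpha_large: "v alpha \<ge> 2" and lam_small: "v lam \<le> 1/2"
begin

abbreviation "A \<equiv> A_seq d alpha lam"
abbreviation "B \<equiv> B_seq d alpha lam"

lemma algebraic_A: "algebraic (A n)" and algebraic_B: "algebraic (B n)"
  using algebraic_A_B_seq[OF alpha lam] by auto

lemma abs_A_Suc_close: "\<bar>v (A (Suc n)) - v (A n) ^ d\<bar> \<le> v lam * v (B n) ^ d"
proof -
  have pow: "algebraic (A n ^ d)" and shift: "algebraic (lam * B n ^ d)"
    using algebraic_A algebraic_B lam by (auto intro: algebraic_power algebraic_plus_times)
  have "v (lam * B n ^ d) = v lam * v (B n) ^ d"
    using abs_value_mult[OF v lam algebraic_power] abs_value_power[OF v] algebraic_B by auto
  thus ?thesis
    using abs_value_triangle[OF v pow shift] abs_value_triangle_rev[OF v pow shift]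
      abs_value_power[OF v algebraic_A] by (simp add: A_seq_Suc abs_le_iff)
qed

lemma abs_B_Suc: "v (B (Suc n)) = v (A n) * v (B n) ^ (d - 1)"
  using abs_value_mult[OF v algebraic_A algebraic_power[OF algebraic_B]]
    abs_value_power[OF v algebraic_B] by (simp add: B_seq_Suc)

lemma abs_A_Suc_bounds:
  assumes "0 < v (A n)" "2 * v (B n) \<le> v (A n)"
  shows "v (A n) ^ d / 2 \<le> v (A (Suc n))" "v (A (Suc n)) \<le> 2 * v (A n) ^ d"
    "2 * v (B (Suc n)) \<le> v (A (Suc n))"
  using dominant_term_step[OF d assms(1) abs_value_nonneg[OF v algebraic_B] assms(2)
      abs_value_nonneg[OF v lam] lam_small abs_A_Suc_close]
  by (simp_all add: abs_B_Suc)

lemma abs_A_dominates: "0 < v (A n) \<and> 2 * v (B n) \<le> v (A n)"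
proof (induction n)
  case 0
  thus ?case using alpha_large by (simp add: A_seq_0 B_seq_0 abs_value_one[OF v])
next
  case (Suc n)
  hence "0 < v (A n) ^ d / 2" by simp
  with abs_A_Suc_bounds[OF conjunct1[OF Suc.IH] conjunct2[OF Suc.IH]] show ?case by linarith
qed

lemma M_seq_eq_abs_A: "M_seq v d alpha lam n = v (A n)"
  using abs_A_dominates[of n] abs_value_nonneg[OF v algebraic_B, of n]
  by (simp add: M_seq_def max_def)

lemma ln_M_seq_Suc_close:
  "\<bar>ln (M_seq v d alpha lam (Suc n)) - real d * ln (M_seq v d alpha lam n)\<bar> \<le> ln 2"
proof -
  have pos: "0 < v (A n)" and pos_Suc: "0 < v (A (Suc n))" using abs_A_dominates by blast+
  note bounds = abs_A_Suc_bounds[OF pos conjunct2[OF abs_A_dominates]]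
  have "ln (v (A n) ^ d / 2) \<le> ln (v (A (Suc n)))"
    using bounds(1) pos by (intro ln_mono) auto
  moreover have "ln (v (A (Suc n))) \<le> ln (2 * v (A n) ^ d)"
    using bounds(2) pos_Suc by (intro ln_mono) auto
  ultimately show ?thesis
    using pos pos_Suc by (simp add: M_seq_eq_abs_A ln_div ln_mult ln_realpow abs_le_iff)
qed

end

theorem proposition6p1:
  fixes d :: nat and alpha lam :: complex and v :: "complex \<Rightarrow> real" and n0 :: nat
  assumes "d > 2"
    and "alpha \<in> Qbar" and "lam \<in> Qbar"
    and "is_abs_value_Qbar v"
    and "v alpha \<ge> 2" and "v lam \<le> 1/2"
  shows "convergent (\<lambda>n. ln (M_seq v d alpha lam n) / real d ^ n)
    \<and> \<bar>lim (\<lambda>n. ln (M_seq v d alpha lam n) / real d ^ n)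
         - ln (M_seq v d alpha lam n0) / real d ^ n0\<bar>
       \<le> ln 2 / (real d ^ n0 * (real d - 1))"
proof (rule convergent_and_tail_bound_if_geometric_increments)
  show "real d > 1" using assms(1) by simp
  fix n
  let ?M = "M_seq v d alpha lam"
  have dn: "real d ^ n > 0" using assms(1) by simp
  have "ln (?M (Suc n)) / real d ^ Suc n - ln (?M n) / real d ^ n
      = (ln (?M (Suc n)) - real d * ln (?M n)) / real d ^ Suc n"
    using assms(1) by (simp add: field_simps)
  moreover have "\<bar>ln (?M (Suc n)) - real d * ln (?M n)\<bar> \<le> ln 2"
    using ln_M_seq_Suc_close assms by (auto simp: Qbar_def)
  ultimately show "\<bar>ln (?M (Suc n)) / real d ^ Suc n - ln (?M n) / real d ^ n\<bar>
      \<le> ln 2 / real d ^ Suc n"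
    using dn assms(1) by (simp add: abs_divide divide_right_mono)
qed

end
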